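(* Let $p\le1/2$ and let $g,h\colon(\{0,1\}^n,\mu_p)\to\{0,1\}$ be cross-intersecting. Then \[\mu_p(h)\mu_p(g)\le\sum_{d=1}^n\left(\frac{p}{1-p}\right)^d|\langle h^{=d},g\rangle|,\] where the inner product is with respect to $\mu_p$.
   Context: $\mu_p$ is the $p$-biased product measure on $\{0,1\}^n$, $\mu_p(f)=\mathbb{E}_{\mu_p}f$, $\langle u,v\rangle=\mathbb{E}_{\mu_p}[uv]$. With $\chi_i(x)=\frac{x_i-p}{\sqrt{p(1-p)}}$ and $\chi_S=\prod_{i\in S}\chi_i$, $\hat h(S)=\langle h,\chi_S\rangle$ and $h^{=d}=\sum_{|S|=d}\hat h(S)\chi_S$. Identifying subsets of $[n]$ with points of $\{0,1\}^n$, $g,h$ are cross-intersecting if $A\cap B\ne\emptyset$ whenever $g(A)=1$ and $h(B)=1$. *)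

theory Defs
  imports "HOL-Analysis.Analysis"
begin

text \<open>Points of the cube {0,1}^n are identified with subsets of {0..<n}.\<close>

definition cube :: "nat \<Rightarrow> nat set set" where
  "cube n = Pow {..<n}"

definition mu_weight :: "nat \<Rightarrow> real \<Rightarrow> nat set \<Rightarrow> real" where
  "mu_weight n p x = p ^ card x * (1 - p) ^ (n - card x)"

definition expect :: "nat \<Rightarrow> real \<Rightarrow> (nat set \<Rightarrow> real) \<Rightarrow> real" where
  "expect n p f = (\<Sum>x\<in>cube n. mu_weight n p x * f x)"

definition inner_p :: "nat \<Rightarrow> real \<Rightarrow> (nat set \<Rightarrow> real) \<Rightarrow> (nat set \<Rightarrow> real) \<Rightarrow> real" where
  "inner_p n p u v = expect n p (\<lambda>x. u x * v x)"

definition chi1 :: "real \<Rightarrow> nat \<Rightarrow> nat set \<Rightarrow> real" where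
  "chi1 p i x = ((if i \<in> x then 1 else 0) - p) / sqrt (p * (1 - p))"

definition chi :: "real \<Rightarrow> nat set \<Rightarrow> nat set \<Rightarrow> real" where
  "chi p S x = (\<Prod>i\<in>S. chi1 p i x)"

definition fourier :: "nat \<Rightarrow> real \<Rightarrow> (nat set \<Rightarrow> real) \<Rightarrow> nat set \<Rightarrow> real" where
  "fourier n p h S = inner_p n p h (chi p S)"

definition level :: "nat \<Rightarrow> real \<Rightarrow> nat \<Rightarrow> (nat set \<Rightarrow> real) \<Rightarrow> nat set \<Rightarrow> real" where
  "level n p d h x = (\<Sum>S\<in>{S\<in>cube n. card S = d}. fourier n p h S * chi p S x)"

definition boolean_fun :: "nat \<Rightarrow> (nat set \<Rightarrow> real) \<Rightarrow> bool" where
  "boolean_fun n f \<longleftrightarrow> (\<forall>x\<in>cube n. f x = 0 \<or> f x = 1)"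

definition cross_intersecting :: "nat \<Rightarrow> (nat set \<Rightarrow> real) \<Rightarrow> (nat set \<Rightarrow> real) \<Rightarrow> bool" where
  "cross_intersecting n g h \<longleftrightarrow>
     (\<forall>A\<in>cube n. \<forall>B\<in>cube n. g A = 1 \<longrightarrow> h B = 1 \<longrightarrow> A \<inter> B \<noteq> {})"

end

theory Submission
  imports Defs
begin

text \<open>Let \<open>q = p/(1-p)\<close>. The noise kernel
  \<open>K(x,y) = \<Sum>\<^sub>S (-q)^|S| \<chi>\<^sub>S(x) \<chi>\<^sub>S(y)\<close> factorises as \<open>\<Prod>\<^sub>i (1 - q \<chi>\<^sub>i(x) \<chi>\<^sub>i(y))\<close>,
  and the factor at any coordinate \<open>i \<in> x \<inter> y\<close> is \<open>1 - q (1-p)/p = 0\<close>. Since \<open>h(x) g(y) = 1\<close>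
  forces \<open>x \<inter> y \<noteq> {}\<close>, this gives \<open>\<Sum>\<^sub>S (-q)^|S| \<hat>h(S) \<hat>g(S) = 0\<close>. Grouping by levels,
  the \<open>S = {}\<close> term \<open>\<mu>(h) \<mu>(g)\<close> equals minus the sum of the terms of degree \<open>d \<ge> 1\<close>,
  and the triangle inequality finishes the proof.\<close>

lemma chi1_mult_chi1_common:
  assumes "0 < p" "p < 1" "i \<in> x" "i \<in> y"
  shows "chi1 p i x * chi1 p i y = (1 - p) / p"
proof -
  have "chi1 p i x * chi1 p i y = (1 - p) ^ 2 / sqrt (p * (1 - p)) ^ 2"
    using assms(3,4) by (simp add: chi1_def power2_eq_square)
  also have "\<dots> = (1 - p) ^ 2 / (p * (1 - p))"
    using assms(1,2) by simp
  also have "\<dots> = (1 - p) / p"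
    using assms(1,2) by (simp add: power2_eq_square)
  finally show ?thesis .
qed

lemma noise_kernel_eq_prod:
  "(\<Sum>S\<in>cube n. t ^ card S * (chi p S x * chi p S y))
     = (\<Prod>i<n. 1 + t * (chi1 p i x * chi1 p i y))"
proof -
  have "(\<Sum>S\<in>cube n. t ^ card S * (chi p S x * chi p S y))
      = (\<Sum>S\<in>Pow {..<n}. \<Prod>i\<in>S. t * (chi1 p i x * chi1 p i y))"
    unfolding cube_def chi_def by (simp add: prod.distrib)
  also have "\<dots> = (\<Prod>i<n. t * (chi1 p i x * chi1 p i y) + 1)"
    using prod_add[of "{..<n}" "\<lambda>i. t * (chi1 p i x * chi1 p i y)" "\<lambda>_. 1"] by simp
  finally show ?thesis by (simp add: add.commute)
qed

lemma noise_kernel_vanishes: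
  assumes "0 < p" "p < 1" "x \<in> cube n" "x \<inter> y \<noteq> {}"
  shows "(\<Sum>S\<in>cube n. (- (p / (1 - p))) ^ card S * (chi p S x * chi p S y)) = 0"
proof -
  obtain i where i: "i \<in> x" "i \<in> y" using assms(4) by blast
  then have "i < n" using assms(3) by (auto simp: cube_def)
  moreover have "1 + - (p / (1 - p)) * (chi1 p i x * chi1 p i y) = 0"
    using chi1_mult_chi1_common[OF assms(1,2) i] assms(1,2) by (simp add: field_simps)
  ultimately show ?thesis
    unfolding noise_kernel_eq_prod by (intro prod_zero) auto
qed

lemma fourier_empty: "fourier n p u {} = expect n p u"
  by (simp add: fourier_def inner_p_def chi_def)

lemma inner_level:
  "inner_p n p (level n p d h) g
     = (\<Sum>S\<in>{S\<in>cube n. card S = d}. fourier n p h S * fourier n p g S)"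
proof -
  have "inner_p n p (level n p d h) g
     = (\<Sum>x\<in>cube n. \<Sum>S\<in>{S\<in>cube n. card S = d}.
          fourier n p h S * (mu_weight n p x * (g x * chi p S x)))"
    unfolding inner_p_def expect_def level_def
    by (simp add: sum_distrib_left sum_distrib_right ac_simps)
  also have "\<dots> = (\<Sum>S\<in>{S\<in>cube n. card S = d}. \<Sum>x\<in>cube n.
          fourier n p h S * (mu_weight n p x * (g x * chi p S x)))"
    by (rule sum.swap)
  also have "\<dots> = (\<Sum>S\<in>{S\<in>cube n. card S = d}. fourier n p h S * fourier n p g S)"
    by (simp add: fourier_def inner_p_def expect_def sum_distrib_left)
  finally show ?thesis .
qed

lemma sum_cube_by_card:
  "(\<Sum>S\<in>cube n. f S) = (\<Sum>d=0..n. \<Sum>S\<in>{S\<in>cube n. card S = d}. f S)"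
proof -
  have "card ` cube n \<subseteq> {0..n}"
    by (auto simp: cube_def intro: card_mono[of "{..<n}", simplified])
  then show ?thesis
    using sum.group[of "cube n" "{0..n}" card f] by (simp add: cube_def)
qed

lemma sum_levels_eq_noise:
  "(\<Sum>d=0..n. t ^ d * inner_p n p (level n p d h) g)
     = (\<Sum>S\<in>cube n. t ^ card S * (fourier n p h S * fourier n p g S))"
  unfolding sum_cube_by_card[where n = n] inner_level sum_distrib_left
  by (intro sum.cong) auto

lemma noise_form_eq_kernel:
  "(\<Sum>S\<in>cube n. t ^ card S * (fourier n p h S * fourier n p g S))
     = (\<Sum>x\<in>cube n. \<Sum>y\<in>cube n. (mu_weight n p x * h x) * (mu_weight n p y * g y) *
          (\<Sum>S\<in>cube n. t ^ card S * (chi p S x * chi p S y)))"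
proof -
  have "(\<Sum>S\<in>cube n. t ^ card S * (fourier n p h S * fourier n p g S))
      = (\<Sum>S\<in>cube n. \<Sum>x\<in>cube n. \<Sum>y\<in>cube n. (mu_weight n p x * h x) * (mu_weight n p y * g y) *
          (t ^ card S * (chi p S x * chi p S y)))"
    unfolding fourier_def inner_p_def expect_def
    by (intro sum.cong refl) (simp add: sum_product sum_distrib_left mult_ac)
  also have "\<dots> = (\<Sum>x\<in>cube n. \<Sum>y\<in>cube n. \<Sum>S\<in>cube n.
          (mu_weight n p x * h x) * (mu_weight n p y * g y) * (t ^ card S * (chi p S x * chi p S y)))"
    by (subst sum.swap) (intro sum.cong refl sum.swap)
  finally show ?thesis by (simp add: sum_distrib_left)
qed

lemma cross_intersecting_noise_form_zero:
  assumes "0 < p" "p < 1" "boolean_fun n g" "boolean_fun n h" "cross_intersecting n g h"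
  shows "(\<Sum>S\<in>cube n. (- (p / (1 - p))) ^ card S * (fourier n p h S * fourier n p g S)) = 0"
  unfolding noise_form_eq_kernel
proof (intro sum.neutral ballI)
  fix x y assume x: "x \<in> cube n" and y: "y \<in> cube n"
  show "mu_weight n p x * h x * (mu_weight n p y * g y) *
          (\<Sum>S\<in>cube n. (- (p / (1 - p))) ^ card S * (chi p S x * chi p S y)) = 0"
  proof (cases "h x = 1 \<and> g y = 1")
    case True
    then have "x \<inter> y \<noteq> {}"
      using assms(5) x y unfolding cross_intersecting_def by blast
    then show ?thesis using noise_kernel_vanishes[OF assms(1,2) x] by simp
  next
    case False
    then have "h x = 0 \<or> g y = 0" using assms(3,4) x y unfolding boolean_fun_def by auto
    then show ?thesis by auto
  qed
qed

theorem mainTheorem17: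
  fixes n :: nat and p :: real and g h :: "nat set \<Rightarrow> real"
  assumes "0 < p" and "p \<le> 1/2"
    and "boolean_fun n g" and "boolean_fun n h"
    and "cross_intersecting n g h"
  shows "expect n p h * expect n p g
           \<le> (\<Sum>d=1..n. (p / (1 - p)) ^ d * \<bar>inner_p n p (level n p d h) g\<bar>)"
proof -
  define q where "q = p / (1 - p)"
  define a where "a d = (- q) ^ d * inner_p n p (level n p d h) g" for d
  have "q \<ge> 0" using assms(1,2) by (simp add: q_def)
  have "{S\<in>cube n. card S = 0} = {{}}"
    using finite_subset[of _ "{..<n}"] by (auto simp: cube_def)
  then have a0: "a 0 = expect n p h * expect n p g"
    by (simp add: a_def inner_level fourier_empty)
  have "(\<Sum>d=0..n. a d) = 0"
    \<comment> \<open>of \<open>p \<le> 1/2\<close> only \<open>p < 1\<close> is needed\<close>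
    using cross_intersecting_noise_form_zero[OF assms(1) _ assms(3-5)] assms(2)
    by (simp add: a_def q_def sum_levels_eq_noise)
  then have "expect n p h * expect n p g = - (\<Sum>d=1..n. a d)"
    by (simp add: sum.atLeast_Suc_atMost a0)
  also have "\<dots> \<le> (\<Sum>d=1..n. \<bar>a d\<bar>)"
    using sum_abs[of a "{1..n}"] by linarith
  also have "\<dots> = (\<Sum>d=1..n. q ^ d * \<bar>inner_p n p (level n p d h) g\<bar>)"
    using \<open>q \<ge> 0\<close> by (simp add: a_def abs_mult power_abs)
  finally show ?thesis unfolding q_def .
qed

end
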